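(* Assume the lifted model described in the context is well-posed and topologically detectable, and let $\mathcal{G}_T$ be its topology. Let $i\neq j$ be vertices with $i\in N_{\mathcal{G}_T}(j,2)$ and $i\notin N_{\mathcal{G}_T}(j)$ (i.e. $i$ and $j$ are strict two-hop neighbors). Then the $T\times T$ matrix $\mathbf{B}_j'\,\Phi_X^{-1}(\omega)\,\mathbf{B}_i$ is Hermitian positive semidefinite, $\mathbf{B}_j'\Phi_X^{-1}(\omega)\mathbf{B}_i\succeq0$, for all $\omega\in[0,2\pi)$ (at which it is defined).
   Context: Model: real $b_{ij}\ge0$ for $i\ne j$, $b_{ii}=0$; for each $i$ a stable scalar filter $g_i$ with $z$-transform $1/\mathsf{S}_i(z)$, $\mathsf{S}_i(z)=\sum_{n=1}^{l}a_{n,i}\big(\frac{2(1-z^{-1})}{\Delta t(1+z^{-1})}\big)^n+\sum_{j\ne i}b_{ij}$; $h_{ij}=b_{ij}g_i$. For a scalar filter $f$ its $T$-lifting is the $T\times T$ matrix filter with $(p,t)$ entry $a\mapsto f(aT+p-t)$, $p,t\in\{0,\dots,T-1\}$. Let $H_{ij}$ be the $T$-lifting of $h_{ij}$ (so $H_{ij}=b_{ij}G_i$ with $G_i$ the lifting of $g_i$, and $H_{ii}=\mathbf{0}$), with frequency response $\mathsf{H}_{ij}(\omega)=\sum_a H_{ij}[a]e^{-\mathrm{i}\omega a}$. The lifted processes $X_i$, $E_i$ ($T$-vector valued) satisfy $X_i(k)=\sum_j (H_{ij}*X_j)(k)+E_i(k)$; $E_1,\dots,E_m$ are jointly wide-sense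 stationary, zero-mean and mutually uncorrelated, with power spectral density matrices $\Phi_{E_i}(\omega)$. Stack $X=[X_1',\dots,X_m']'$, $E=[E_1',\dots,E_m']'$ and let $\mathbb{H}(\omega)$ be the $mT\times mT$ block matrix with $(i,j)$ block $\mathsf{H}_{ij}(\omega)$, so $X=\mathbb{H}*X+E$. Well-posed: $\mathbb{I}-\mathbb{H}(\omega)$ is invertible for almost every $\omega$ (so $X=(\mathbb{I}-\mathbb{H})^{-1}E$ and $\Phi_X(\omega)$ denotes the power spectral density of $X$). Topologically detectable: $\Phi_{E_j}(\omega)\succ0$ for every $\omega$ and every $j$. $\mathbf{B}_j\in\mathbb{R}^{mT\times T}$ is the block column matrix whose $j$-th $T\times T$ block is $I_T$ and whose other blocks are zero. Graphs: the LDG $\mathcal{G}$ has vertices $1,\dots,m$ and a directed edge $i\to j$ iff $b_{ji}\ne0$; the children of $j$ are $\mathcal{C}_{\mathcal{G}}(j)=\{k: b_{kj}\neq0\}$. The topology $\mathcal{G}_T$ is the undirected graph with an edge $\{i,j\}$ iff $b_{ij}\neq0$ or $b_{ji}\neq0$; $N_{\mathcal{G}_T}(j)$ is the set of neighbors of $j$ in $\mathcal{G}_T$, and $N_{\mathcal{G}_T}(j,2)=\{i: \text{there is } k \text{ with } \{j,k\},\{i,k\}\text{ edges of }\mathcal{G}_T\}$. *)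

theory Defs
  imports "HOL-Analysis.Analysis" "Jordan_Normal_Form.Schur_Decomposition"
begin

(* Vertices are 0..<m; a T-vector/T x T block is indexed by 0..<T; the stacked
   mT-vector uses index i*T + p for block i, component p. *)

definition cmat_inv :: "complex mat \<Rightarrow> complex mat" where
  "cmat_inv A = (SOME B. B \<in> carrier_mat (dim_row A) (dim_row A) \<and>
      A * B = 1\<^sub>m (dim_row A) \<and> B * A = 1\<^sub>m (dim_row A))"

definition hermitian_cmat :: "complex mat \<Rightarrow> bool" where
  "hermitian_cmat A \<longleftrightarrow> A \<in> carrier_mat (dim_row A) (dim_row A) \<and> mat_adjoint A = A"

definition psd_cmat :: "complex mat \<Rightarrow> bool" where
  "psd_cmat A \<longleftrightarrow> hermitian_cmat A \<and>
     (\<forall>v \<in> carrier_vec (dim_row A). 0 \<le> Re (conjugate v \<bullet> (A *\<^sub>v v)))"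

definition pd_cmat :: "complex mat \<Rightarrow> bool" where
  "pd_cmat A \<longleftrightarrow> hermitian_cmat A \<and>
     (\<forall>v \<in> carrier_vec (dim_row A). v \<noteq> 0\<^sub>v (dim_row A) \<longrightarrow> 0 < Re (conjugate v \<bullet> (A *\<^sub>v v)))"

definition bilin :: "real \<Rightarrow> complex \<Rightarrow> complex" where
  "bilin dt z = 2 * (1 - inverse z) / (of_real dt * (1 + inverse z))"

definition Sden :: "nat \<Rightarrow> (nat \<Rightarrow> nat \<Rightarrow> real) \<Rightarrow> (nat \<Rightarrow> nat \<Rightarrow> real) \<Rightarrow> nat \<Rightarrow> real
                    \<Rightarrow> nat \<Rightarrow> complex \<Rightarrow> complex" where
  "Sden l a b m dt i z = (\<Sum>n = 1..l. of_real (a n i) * bilin dt z ^ n)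
       + of_real (\<Sum>j \<in> {0..<m} - {i}. b i j)"

(* (p,t) entry of the frequency response of the T-lifting of the scalar filter f:
   sum_a f(aT+p-t) e^{-i \<omega> a} *)
definition lift_fr :: "(int \<Rightarrow> real) \<Rightarrow> nat \<Rightarrow> real \<Rightarrow> nat \<Rightarrow> nat \<Rightarrow> complex" where
  "lift_fr f T \<omega> p t = (\<Sum>\<^sub>\<infinity>a\<in>(UNIV::int set).
       of_real (f (a * int T + int p - int t)) * exp (- \<i> * of_real \<omega> * of_int a))"

(* the mT x mT matrix \<bbbH>(\<omega>), (i,j) block = b_ij G_i(\<omega>) *)
definition bigH :: "(nat \<Rightarrow> nat \<Rightarrow> real) \<Rightarrow> (nat \<Rightarrow> int \<Rightarrow> real) \<Rightarrow> nat \<Rightarrow> nat \<Rightarrow> real \<Rightarrow> complex mat" where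
  "bigH b g m T \<omega> = mat (m * T) (m * T) (\<lambda>(r, c).
       of_real (b (r div T) (c div T)) * lift_fr (g (r div T)) T \<omega> (r mod T) (c mod T))"

(* PSD of E: block diagonal since E_1..E_m are mutually uncorrelated *)
definition PhiE_blk :: "(nat \<Rightarrow> real \<Rightarrow> complex mat) \<Rightarrow> nat \<Rightarrow> nat \<Rightarrow> real \<Rightarrow> complex mat" where
  "PhiE_blk PhiE m T \<omega> = mat (m * T) (m * T) (\<lambda>(r, c).
       if r div T = c div T then PhiE (r div T) \<omega> $$ (r mod T, c mod T) else 0)"

(* PSD of X = (I - \<bbbH>)^{-1} E :  \<Phi>_X = (I-\<bbbH>)^{-1} \<Phi>_E (I-\<bbbH>)^{-*} *)
definition PhiX :: "(nat \<Rightarrow> nat \<Rightarrow> real) \<Rightarrow> (nat \<Rightarrow> int \<Rightarrow> real) \<Rightarrow> (nat \<Rightarrow> real \<Rightarrow> complex mat)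
                    \<Rightarrow> nat \<Rightarrow> nat \<Rightarrow> real \<Rightarrow> complex mat" where
  "PhiX b g PhiE m T \<omega> =
     (let M = cmat_inv (1\<^sub>m (m * T) - bigH b g m T \<omega>)
      in M * PhiE_blk PhiE m T \<omega> * mat_adjoint M)"

definition Bsel :: "nat \<Rightarrow> nat \<Rightarrow> nat \<Rightarrow> complex mat" where
  "Bsel m T j = mat (m * T) T (\<lambda>(r, c). if r = j * T + c then 1 else 0)"

definition topo_edge :: "(nat \<Rightarrow> nat \<Rightarrow> real) \<Rightarrow> nat \<Rightarrow> nat \<Rightarrow> bool" where
  "topo_edge b i j \<longleftrightarrow> b i j \<noteq> 0 \<or> b j i \<noteq> 0"

definition nbr :: "(nat \<Rightarrow> nat \<Rightarrow> real) \<Rightarrow> nat \<Rightarrow> nat \<Rightarrow> nat set" where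
  "nbr b m j = {i. i < m \<and> topo_edge b j i}"

definition nbr2 :: "(nat \<Rightarrow> nat \<Rightarrow> real) \<Rightarrow> nat \<Rightarrow> nat \<Rightarrow> nat set" where
  "nbr2 b m j = {i. i < m \<and> (\<exists>k < m. topo_edge b j k \<and> topo_edge b i k)}"

end

theory Submission
  imports Defs
begin

(* With A = I - \<bbbH>(\<omega>) we have \<Phi>_X = A^-1 \<Phi>_E A^-*, so \<Phi>_X^-1 = A^* \<Phi>_E^-1 A, where \<Phi>_E^-1 is
   block diagonal with positive semidefinite blocks Q_k = \<Phi>_{E_k}^-1. Hence the (j,i) block of
   \<Phi>_X^-1 is the sum over k of A_kj^* Q_k A_ki. Off the diagonal A_kl = -b_kl G_k, where G_k depends
   only on the row block k. If i and j are not adjacent then A_ij = A_ji = 0, so the terms k = i and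
   k = j vanish and every other term is b_kj b_ki G_k^* Q_k G_k, a nonnegative multiple of a positive
   semidefinite matrix. Only invertibility of I - \<bbbH>(\<omega>), detectability, b >= 0 and non-adjacency
   are used. *)

(* The Jordan_Normal_Form notations $ and \<bullet> clash with those of HOL-Analysis. *)
unbundle no vec_syntax and no inner_syntax

section \<open>Adjoints, scalar multiples and inverses of matrices\<close>

lemma mat_adjoint_dim [simp]:
  "dim_row (mat_adjoint A) = dim_col A" "dim_col (mat_adjoint A) = dim_row A"
  by (simp_all add: mat_adjoint_def)

lemma mat_adjoint_carrier [simp]: "mat_adjoint A \<in> carrier_mat n k \<longleftrightarrow> A \<in> carrier_mat k n"
  unfolding carrier_mat_def by auto

lemma index_mat_adjoint [simp]:
  "i < dim_col A \<Longrightarrow> j < dim_row A \<Longrightarrow> mat_adjoint A $$ (i, j) = conjugate (A $$ (j, i))"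
  by (simp add: mat_adjoint_def mat_of_rows_index)

lemma mat_adjoint_mult:
  fixes A B :: "'a :: conjugatable_field mat"
  assumes "A \<in> carrier_mat n k" "B \<in> carrier_mat k l"
  shows "mat_adjoint (A * B) = mat_adjoint B * mat_adjoint A"
  using assms
  by (intro eq_matI) (auto simp: scalar_prod_def sum_conjugate conjugate_dist_mul mult.commute intro: sum.cong)

lemma conjugate_one [simp]: "conjugate (1 :: 'a :: conjugatable_field) = 1"
proof -
  have "conjugate (1::'a) * conjugate 1 = conjugate 1 * 1"
    using conjugate_dist_mul[of "1::'a" 1] by simp
  moreover have "conjugate (1::'a) \<noteq> 0" by simp
  ultimately show ?thesis by simp
qed

lemma mat_adjoint_one [simp]: "mat_adjoint (1\<^sub>m n :: 'a :: conjugatable_field mat) = 1\<^sub>m n"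
  by (intro eq_matI) auto

lemma mat_adjoint_zero [simp]: "mat_adjoint (0\<^sub>m n k :: 'a :: conjugatable_field mat) = 0\<^sub>m k n"
  by (intro eq_matI) auto

lemma mat_adjoint_adjoint [simp]: "mat_adjoint (mat_adjoint A) = A"
  by (intro eq_matI) auto

lemma mat_adjoint_smult: "mat_adjoint (c \<cdot>\<^sub>m A) = conjugate c \<cdot>\<^sub>m mat_adjoint A"
  by (intro eq_matI) (auto simp: conjugate_dist_mul)

lemma scalar_prod_mat_adjoint:
  fixes X :: "'a :: conjugatable_field mat"
  assumes X: "X \<in> carrier_mat n r" and v: "v \<in> carrier_vec r" and w: "w \<in> carrier_vec n"
  shows "conjugate v \<bullet> (mat_adjoint X *\<^sub>v w) = conjugate (X *\<^sub>v v) \<bullet> (w :: 'a vec)"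
proof -
  have "conjugate v \<bullet> (mat_adjoint X *\<^sub>v w)
      = (\<Sum>i\<in>{0..<r}. conjugate (v $ i) * (\<Sum>j\<in>{0..<n}. conjugate (X $$ (j, i)) * w $ j))"
    using X v w by (simp add: scalar_prod_def)
  also have "\<dots> = (\<Sum>i\<in>{0..<r}. \<Sum>j\<in>{0..<n}. conjugate (v $ i) * conjugate (X $$ (j, i)) * w $ j)"
    by (simp add: sum_distrib_left mult.assoc)
  also have "\<dots> = (\<Sum>j\<in>{0..<n}. \<Sum>i\<in>{0..<r}. conjugate (v $ i) * conjugate (X $$ (j, i)) * w $ j)"
    by (rule sum.swap)
  also have "\<dots> = (\<Sum>j\<in>{0..<n}. conjugate (\<Sum>i\<in>{0..<r}. X $$ (j, i) * v $ i) * w $ j)"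
    by (simp add: sum_conjugate conjugate_dist_mul sum_distrib_left sum_distrib_right mult.commute)
  also have "\<dots> = conjugate (X *\<^sub>v v) \<bullet> w"
    using X v w by (simp add: scalar_prod_def)
  finally show ?thesis .
qed

lemma cmat_inv_eqI:
  assumes A: "A \<in> carrier_mat n n" and B: "B \<in> carrier_mat n n" and AB: "A * B = 1\<^sub>m n"
  shows "cmat_inv A = B"
proof -
  let ?inverse = "\<lambda>C. C \<in> carrier_mat (dim_row A) (dim_row A) \<and>
    A * C = 1\<^sub>m (dim_row A) \<and> C * A = 1\<^sub>m (dim_row A)"
  have "?inverse B"
    using A B AB mat_mult_left_right_inverse[OF A B AB] by simp
  then have "?inverse (cmat_inv A)" unfolding cmat_inv_def by (rule someI)
  then have C: "cmat_inv A \<in> carrier_mat n n" "cmat_inv A * A = 1\<^sub>m n" using A by simp_all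
  have "cmat_inv A = cmat_inv A * (A * B)" using C AB by simp
  also have "\<dots> = (cmat_inv A * A) * B" by (rule assoc_mult_mat[symmetric, OF C(1) A B])
  finally show ?thesis using B C by simp
qed

lemma cmat_inv_inverse:
  assumes A: "A \<in> carrier_mat n n" and inv: "invertible_mat A"
  shows "cmat_inv A \<in> carrier_mat n n" "A * cmat_inv A = 1\<^sub>m n" "cmat_inv A * A = 1\<^sub>m n"
proof -
  obtain B where AB: "A * B = 1\<^sub>m n" and BA: "B * A = 1\<^sub>m (dim_row B)"
    using A inv by (auto simp: invertible_mat_def inverts_mat_def)
  have B: "B \<in> carrier_mat n n"
    using A arg_cong[OF AB, of dim_col] arg_cong[OF BA, of dim_col] by auto
  show "cmat_inv A \<in> carrier_mat n n" "A * cmat_inv A = 1\<^sub>m n" "cmat_inv A * A = 1\<^sub>m n"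
    using cmat_inv_eqI[OF A B AB] B AB BA by auto
qed

lemma cmat_inv_sandwich:
  assumes A: "A \<in> carrier_mat n n" "invertible_mat A" and D: "D \<in> carrier_mat n n" "invertible_mat D"
  shows "cmat_inv (cmat_inv A * D * mat_adjoint (cmat_inv A)) = mat_adjoint A * cmat_inv D * A"
proof (rule cmat_inv_eqI)
  note Ai = cmat_inv_inverse[OF A] and Di = cmat_inv_inverse[OF D]
  have adj: "mat_adjoint (cmat_inv A) * mat_adjoint A = 1\<^sub>m n"
    using mat_adjoint_mult[OF A(1) Ai(1)] Ai(2) by simp
  have "cmat_inv A * D * mat_adjoint (cmat_inv A) * (mat_adjoint A * cmat_inv D * A)
      = cmat_inv A * D * (mat_adjoint (cmat_inv A) * mat_adjoint A) * cmat_inv D * A"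
    using A D Ai Di by (simp add: assoc_mult_mat[of _ n n _ n _ n])
  also have "\<dots> = cmat_inv A * (D * cmat_inv D) * A"
    using adj A D Ai Di by (simp add: assoc_mult_mat[of _ n n _ n _ n])
  also have "\<dots> = 1\<^sub>m n"
    using A D Ai Di by simp
  finally show "cmat_inv A * D * mat_adjoint (cmat_inv A) * (mat_adjoint A * cmat_inv D * A) = 1\<^sub>m n" .
qed (use A D cmat_inv_inverse[OF A] cmat_inv_inverse[OF D] in auto)

lemma zero_smult_mat [simp]: "(0 :: 'a :: semiring_0) \<cdot>\<^sub>m A = 0\<^sub>m (dim_row A) (dim_col A)"
  by (intro eq_matI) auto

lemma smult_smult_mat: "a \<cdot>\<^sub>m (b \<cdot>\<^sub>m A) = (a * b :: 'a :: semigroup_mult) \<cdot>\<^sub>m A"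
  by (intro eq_matI) (auto simp: mult.assoc)

lemma mat_adjoint_smult_mult_smult:
  fixes X Q Y :: "complex mat"
  assumes "X \<in> carrier_mat n r" "Q \<in> carrier_mat n n" "Y \<in> carrier_mat n r'"
  shows "mat_adjoint (complex_of_real a \<cdot>\<^sub>m X) * Q * (complex_of_real b \<cdot>\<^sub>m Y)
    = complex_of_real (a * b) \<cdot>\<^sub>m (mat_adjoint X * Q * Y)"
  using assms
  by (simp add: mat_adjoint_smult mult_smult_assoc_mat[of _ r n] mult_smult_distrib[of _ r n]
      mult_smult_distrib[of _ r n _ r'] mult_smult_assoc_mat[of _ r n _ r'] smult_smult_mat mult.commute)

section \<open>Positive semidefinite matrices\<close>

lemma pd_cmat_imp_psd_cmat:
  assumes "pd_cmat A" shows "psd_cmat A"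
  unfolding psd_cmat_def
proof (intro conjI ballI)
  show "hermitian_cmat A" using assms by (simp add: pd_cmat_def)
  fix v :: "complex vec" assume v: "v \<in> carrier_vec (dim_row A)"
  show "0 \<le> Re (conjugate v \<bullet> (A *\<^sub>v v))"
  proof (cases "v = 0\<^sub>v (dim_row A)")
    case True
    then show ?thesis by (simp add: scalar_prod_def)
  next
    case False
    then show ?thesis using assms v by (auto simp: pd_cmat_def intro: less_imp_le)
  qed
qed

lemma pd_cmat_invertible:
  assumes A: "A \<in> carrier_mat n n" and pd: "pd_cmat A"
  shows "invertible_mat A"
proof -
  have "det A \<noteq> 0"
  proof
    assume "det A = 0"
    then obtain v where v: "v \<in> carrier_vec n" "v \<noteq> 0\<^sub>v n" "A *\<^sub>v v = 0\<^sub>v n"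
      using det_0_iff_vec_prod_zero_field[OF A] by blast
    then have "0 < Re (conjugate v \<bullet> (A *\<^sub>v v))"
      using pd A unfolding pd_cmat_def by auto
    with v show False by simp
  qed
  then have "A \<in> Units (ring_mat TYPE(complex) n ())" by (rule det_non_zero_imp_unit[OF A])
  then obtain B where "B \<in> carrier_mat n n" "B * A = 1\<^sub>m n" "A * B = 1\<^sub>m n"
    unfolding Units_def ring_mat_simps by blast
  with A show ?thesis by (auto simp: invertible_mat_def inverts_mat_def square_mat.simps)
qed

lemma quadratic_form_expand:
  fixes R :: "'a :: conjugatable_field mat"
  assumes "R \<in> carrier_mat n n" "v \<in> carrier_vec n"
  shows "conjugate v \<bullet> (R *\<^sub>v v) = (\<Sum>p<n. \<Sum>q<n. conjugate (v $ p) * R $$ (p, q) * v $ q)"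
  using assms by (simp add: scalar_prod_def lessThan_atLeast0 sum_distrib_left mult.assoc)

lemma quadratic_form_congruence:
  fixes X Q :: "complex mat"
  assumes X: "X \<in> carrier_mat n r" and Q: "Q \<in> carrier_mat n n" and v: "v \<in> carrier_vec r"
  shows "conjugate v \<bullet> ((mat_adjoint X * Q * X) *\<^sub>v v) = conjugate (X *\<^sub>v v) \<bullet> (Q *\<^sub>v (X *\<^sub>v v))"
proof -
  have "(mat_adjoint X * Q * X) *\<^sub>v v = mat_adjoint X *\<^sub>v (Q *\<^sub>v (X *\<^sub>v v))"
    using X Q v by (simp add: assoc_mult_mat_vec[of "mat_adjoint X" r n "Q * X" r v])
  then show ?thesis using X Q v by (simp add: scalar_prod_mat_adjoint)
qed

lemma psd_cmat_congruence:
  fixes X Q :: "complex mat"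
  assumes X: "X \<in> carrier_mat n r" and Q: "Q \<in> carrier_mat n n" "psd_cmat Q"
  shows "psd_cmat (mat_adjoint X * Q * X)"
proof -
  have "mat_adjoint (mat_adjoint X * Q * X) = mat_adjoint X * mat_adjoint Q * X"
    using X Q by (simp add: mat_adjoint_mult[of "mat_adjoint X" r n "Q * X" r] mat_adjoint_mult[of Q n n X r])
  moreover have "mat_adjoint Q = Q" using Q(2) by (simp add: psd_cmat_def hermitian_cmat_def)
  moreover have "0 \<le> Re (conjugate v \<bullet> ((mat_adjoint X * Q * X) *\<^sub>v v))" if v: "v \<in> carrier_vec r" for v
    using quadratic_form_congruence[OF X Q(1) v] Q X v by (simp add: psd_cmat_def)
  ultimately show ?thesis using X Q by (simp add: psd_cmat_def hermitian_cmat_def)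
qed

lemma psd_cmat_inv:
  assumes A: "A \<in> carrier_mat n n" and pd: "pd_cmat A"
  shows "psd_cmat (cmat_inv A)"
proof -
  note Ai = cmat_inv_inverse[OF A pd_cmat_invertible[OF A pd]]
  have herm: "mat_adjoint A = A" using pd by (simp add: pd_cmat_def hermitian_cmat_def)
  have "mat_adjoint (cmat_inv A) * A = 1\<^sub>m n"
    using mat_adjoint_mult[OF A Ai(1)] Ai(2) herm by simp
  then have "mat_adjoint (cmat_inv A) * A * cmat_inv A = cmat_inv A"
    using Ai(1) by simp
  moreover have "psd_cmat (mat_adjoint (cmat_inv A) * A * cmat_inv A)"
    by (rule psd_cmat_congruence[OF Ai(1) A pd_cmat_imp_psd_cmat[OF pd]])
  ultimately show ?thesis by simp
qed

lemma psd_cmat_nonneg_combination: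
  fixes R :: "complex mat" and M :: "'i \<Rightarrow> complex mat" and c :: "'i \<Rightarrow> real"
  assumes R: "R \<in> carrier_mat n n" and K: "finite K"
    and M: "\<And>k. k \<in> K \<Longrightarrow> M k \<in> carrier_mat n n" "\<And>k. k \<in> K \<Longrightarrow> psd_cmat (M k)"
    and c: "\<And>k. k \<in> K \<Longrightarrow> 0 \<le> c k"
    and R_eq: "\<And>p q. p < n \<Longrightarrow> q < n \<Longrightarrow> R $$ (p, q) = (\<Sum>k\<in>K. of_real (c k) * M k $$ (p, q))"
  shows "psd_cmat R"
proof -
  have M_herm: "cnj (M k $$ (q, p)) = M k $$ (p, q)" if "k \<in> K" "p < n" "q < n" for k p q
    using M[OF that(1)] that index_mat_adjoint[of p "M k" q]
    by (simp add: psd_cmat_def hermitian_cmat_def)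
  have "mat_adjoint R = R"
    using R K by (intro eq_matI) (auto simp: R_eq M_herm sum_conjugate)
  moreover have "0 \<le> Re (conjugate v \<bullet> (R *\<^sub>v v))" if v: "v \<in> carrier_vec n" for v
  proof -
    have "conjugate v \<bullet> (R *\<^sub>v v) = (\<Sum>p<n. \<Sum>q<n. conjugate (v $ p) * R $$ (p, q) * v $ q)"
      by (rule quadratic_form_expand[OF R v])
    also have "\<dots> = (\<Sum>p<n. \<Sum>q<n. \<Sum>k\<in>K. of_real (c k) * (conjugate (v $ p) * M k $$ (p, q) * v $ q))"
      by (simp add: R_eq sum_distrib_left sum_distrib_right mult_ac)
    also have "\<dots> = (\<Sum>p<n. \<Sum>k\<in>K. \<Sum>q<n. of_real (c k) * (conjugate (v $ p) * M k $$ (p, q) * v $ q))"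
      by (intro sum.cong refl) (rule sum.swap)
    also have "\<dots> = (\<Sum>k\<in>K. \<Sum>p<n. \<Sum>q<n. of_real (c k) * (conjugate (v $ p) * M k $$ (p, q) * v $ q))"
      by (rule sum.swap)
    also have "\<dots> = (\<Sum>k\<in>K. of_real (c k) * (\<Sum>p<n. \<Sum>q<n. conjugate (v $ p) * M k $$ (p, q) * v $ q))"
      by (simp add: sum_distrib_left)
    also have "\<dots> = (\<Sum>k\<in>K. of_real (c k) * (conjugate v \<bullet> (M k *\<^sub>v v)))"
      by (intro sum.cong refl) (simp add: quadratic_form_expand[OF M(1) v])
    finally have "conjugate v \<bullet> (R *\<^sub>v v) = (\<Sum>k\<in>K. of_real (c k) * (conjugate v \<bullet> (M k *\<^sub>v v)))" .
    moreover have "0 \<le> Re (conjugate v \<bullet> (M k *\<^sub>v v))" if "k \<in> K" for k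
      using M[OF that] v by (simp add: psd_cmat_def)
    ultimately show ?thesis using c by (simp add: sum_nonneg)
  qed
  ultimately show ?thesis using R by (simp add: psd_cmat_def hermitian_cmat_def)
qed

section \<open>Block matrices\<close>

lemma block_index_less:
  fixes k m s T :: nat
  assumes "k < m" "s < T"
  shows "k * T + s < m * T"
proof -
  have "(k + 1) * T \<le> m * T" using assms(1) by (intro mult_le_mono1) simp
  with assms(2) show ?thesis by simp
qed

lemma block_index_eq_iff:
  fixes k l s t T :: nat
  assumes "s < T" "t < T"
  shows "k * T + s = l * T + t \<longleftrightarrow> k = l \<and> s = t"
proof
  assume "k * T + s = l * T + t"
  then have "(k * T + s) div T = (l * T + t) div T" "(k * T + s) mod T = (l * T + t) mod T"
    by simp_all
  then show "k = l \<and> s = t" using assms by simp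
qed simp

lemma sum_lessThan_mult_blocks:
  fixes m T :: nat shows "(\<Sum>u < m * T. f u) = (\<Sum>k < m. \<Sum>s < T. f (k * T + s))"
proof -
  have "(\<Sum>u < m * T. f u) = (\<Sum>k < m. \<Sum>u \<in> {k * T..<k * T + T}. f u)"
    by (rule sum.nat_group[symmetric])
  then show ?thesis by (simp add: sum.atLeastLessThan_shift_0 atLeast0LessThan)
qed

definition mat_block :: "nat \<Rightarrow> 'a mat \<Rightarrow> nat \<Rightarrow> nat \<Rightarrow> 'a mat" where
  "mat_block T A k l = mat T T (\<lambda>(s, t). A $$ (k * T + s, l * T + t))"

lemma mat_block_dim [simp]: "dim_row (mat_block T A k l) = T" "dim_col (mat_block T A k l) = T"
  by (simp_all add: mat_block_def)

lemma mat_block_carrier [simp]: "mat_block T A k l \<in> carrier_mat T T"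
  by (simp add: mat_block_def)

lemma index_mat_block [simp]:
  "s < T \<Longrightarrow> t < T \<Longrightarrow> mat_block T A k l $$ (s, t) = A $$ (k * T + s, l * T + t)"
  by (simp add: mat_block_def)

lemma mat_eq_blockwiseI:
  assumes "A \<in> carrier_mat (m * T) (m * T)" "B \<in> carrier_mat (m * T) (m * T)"
    and "\<And>k l. k < m \<Longrightarrow> l < m \<Longrightarrow> mat_block T A k l = mat_block T B k l"
  shows "A = B"
proof (rule eq_matI)
  fix r c assume "r < dim_row B" "c < dim_col B"
  then have rc: "r < m * T" "c < m * T" using assms by auto
  then have T: "0 < T" by (cases T) auto
  have "mat_block T A (r div T) (c div T) $$ (r mod T, c mod T)
      = mat_block T B (r div T) (c div T) $$ (r mod T, c mod T)"
    using rc by (simp add: assms(3) less_mult_imp_div_less)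
  then show "A $$ (r, c) = B $$ (r, c)" using T by (simp add: mult.commute)
qed (use assms in auto)

lemma index_mat_block_mult:
  fixes A B :: "'a :: semiring_0 mat"
  assumes A: "A \<in> carrier_mat (m * T) (m * T)" and B: "B \<in> carrier_mat (m * T) (m * T)"
    and k: "k < m" and l: "l < m" and s: "s < T" and t: "t < T"
  shows "mat_block T (A * B) k l $$ (s, t) = (\<Sum>r<m. (mat_block T A k r * mat_block T B r l) $$ (s, t))"
proof -
  have "mat_block T (A * B) k l $$ (s, t) = (\<Sum>u < m * T. A $$ (k * T + s, u) * B $$ (u, l * T + t))"
    using A B block_index_less[OF k s] block_index_less[OF l t] s t
    by (simp add: scalar_prod_def atLeast0LessThan)
  also have "\<dots> = (\<Sum>r<m. \<Sum>u<T. A $$ (k * T + s, r * T + u) * B $$ (r * T + u, l * T + t))"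
    by (rule sum_lessThan_mult_blocks)
  also have "\<dots> = (\<Sum>r<m. (mat_block T A k r * mat_block T B r l) $$ (s, t))"
    using s t by (simp add: scalar_prod_def atLeast0LessThan)
  finally show ?thesis .
qed

lemma mat_block_one:
  fixes k l m T :: nat
  assumes "k < m" "l < m"
  shows "mat_block T (1\<^sub>m (m * T)) k l = (if k = l then 1\<^sub>m T else 0\<^sub>m T T)"
  using assms by (intro eq_matI) (auto simp: block_index_less block_index_eq_iff)

lemma mat_block_adjoint:
  assumes "A \<in> carrier_mat (m * T) (m * T)" "k < m" "l < m"
  shows "mat_block T (mat_adjoint A) k l = mat_adjoint (mat_block T A l k)"
  using assms block_index_less[OF assms(2)] block_index_less[OF assms(3)]
  by (intro eq_matI) auto

lemma transpose_Bsel_mult_Bsel: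
  fixes M :: "complex mat"
  assumes M: "M \<in> carrier_mat (m * T) (m * T)" and i: "i < m" and j: "j < m"
  shows "transpose_mat (Bsel m T j) * M * Bsel m T i = mat_block T M j i"
proof (rule eq_matI)
  fix p q assume "p < dim_row (mat_block T M j i)" "q < dim_col (mat_block T M j i)"
  then have p: "p < T" and q: "q < T" by simp_all
  have "(transpose_mat (Bsel m T j) * M * Bsel m T i) $$ (p, q)
      = (transpose_mat (Bsel m T j) * M) $$ (p, i * T + q)"
    using M p q block_index_less[OF i q]
    by (simp add: Bsel_def scalar_prod_def if_distrib[of "\<lambda>x. _ * x"] cong: if_cong)
  also have "\<dots> = M $$ (j * T + p, i * T + q)"
    using M p q block_index_less[OF i q] block_index_less[OF j p]
    by (simp add: Bsel_def scalar_prod_def if_distrib[of "\<lambda>x. x * _"] cong: if_cong)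
  finally show "(transpose_mat (Bsel m T j) * M * Bsel m T i) $$ (p, q) = mat_block T M j i $$ (p, q)"
    using p q by simp
qed (simp_all add: Bsel_def)

definition block_diag :: "nat \<Rightarrow> nat \<Rightarrow> (nat \<Rightarrow> 'a :: zero mat) \<Rightarrow> 'a mat" where
  "block_diag m T F = mat (m * T) (m * T) (\<lambda>(r, c).
     if r div T = c div T then F (r div T) $$ (r mod T, c mod T) else 0)"

lemma block_diag_carrier [simp]: "block_diag m T F \<in> carrier_mat (m * T) (m * T)"
  by (simp add: block_diag_def)

lemma block_diag_cong:
  assumes "\<And>k. k < m \<Longrightarrow> F k = G k"
  shows "block_diag m T F = block_diag m T G"
  using assms by (intro eq_matI) (auto simp: block_diag_def less_mult_imp_div_less)

lemma mat_block_block_diag: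
  assumes "k < m" "l < m" "F k \<in> carrier_mat T T"
  shows "mat_block T (block_diag m T F) k l = (if k = l then F k else 0\<^sub>m T T)"
  using assms block_index_less[OF assms(1)] block_index_less[OF assms(2)]
  by (intro eq_matI) (auto simp: block_diag_def)

lemma mat_block_block_diag_mult:
  fixes A :: "'a :: semiring_0 mat"
  assumes A: "A \<in> carrier_mat (m * T) (m * T)" and F: "\<And>k. k < m \<Longrightarrow> F k \<in> carrier_mat T T"
    and k: "k < m" and l: "l < m"
  shows "mat_block T (block_diag m T F * A) k l = F k * mat_block T A k l"
proof (rule eq_matI)
  fix s t assume "s < dim_row (F k * mat_block T A k l)" "t < dim_col (F k * mat_block T A k l)"
  then have st: "s < T" "t < T" using F[OF k] by auto
  have "mat_block T (block_diag m T F * A) k l $$ (s, t)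
      = (\<Sum>r<m. (mat_block T (block_diag m T F) k r * mat_block T A r l) $$ (s, t))"
    by (rule index_mat_block_mult[OF block_diag_carrier A k l st])
  also have "\<dots> = (F k * mat_block T A k l) $$ (s, t)"
    using k st F by (simp add: mat_block_block_diag if_distrib[of "\<lambda>X. (X * _) $$ _"] cong: if_cong)
  finally show "mat_block T (block_diag m T F * A) k l $$ (s, t) = (F k * mat_block T A k l) $$ (s, t)" .
qed (use F[OF k] in auto)

lemma block_diag_mult:
  fixes F G :: "nat \<Rightarrow> 'a :: semiring_0 mat"
  assumes F: "\<And>k. k < m \<Longrightarrow> F k \<in> carrier_mat T T" and G: "\<And>k. k < m \<Longrightarrow> G k \<in> carrier_mat T T"
  shows "block_diag m T F * block_diag m T G = block_diag m T (\<lambda>k. F k * G k)"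
proof (rule mat_eq_blockwiseI)
  fix k l assume k: "k < m" and l: "l < m"
  show "mat_block T (block_diag m T F * block_diag m T G) k l
      = mat_block T (block_diag m T (\<lambda>k. F k * G k)) k l"
    using F[OF k] G[OF k] G[OF l] k l
    by (simp add: mat_block_block_diag_mult[OF block_diag_carrier F k l] mat_block_block_diag)
qed (auto intro: mult_carrier_mat block_diag_carrier)

lemma block_diag_one: "block_diag m T (\<lambda>_. 1\<^sub>m T) = (1\<^sub>m (m * T) :: 'a :: semiring_1 mat)"
  by (rule mat_eq_blockwiseI[of _ m T]) (simp_all add: mat_block_block_diag mat_block_one)

lemma block_diag_inverse:
  fixes F :: "nat \<Rightarrow> complex mat"
  assumes "\<And>k. k < m \<Longrightarrow> F k \<in> carrier_mat T T" "\<And>k. k < m \<Longrightarrow> invertible_mat (F k)"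
  shows "block_diag m T F * block_diag m T (\<lambda>k. cmat_inv (F k)) = 1\<^sub>m (m * T)"
    "block_diag m T (\<lambda>k. cmat_inv (F k)) * block_diag m T F = 1\<^sub>m (m * T)"
  using assms
  by (simp_all add: block_diag_mult cmat_inv_inverse block_diag_cong[of m _ "\<lambda>_. 1\<^sub>m T"] block_diag_one)

lemma invertible_block_diag:
  fixes F :: "nat \<Rightarrow> complex mat"
  assumes "\<And>k. k < m \<Longrightarrow> F k \<in> carrier_mat T T" "\<And>k. k < m \<Longrightarrow> invertible_mat (F k)"
  shows "invertible_mat (block_diag m T F)"
  using block_diag_inverse[where F = F and m = m and T = T, OF assms]
  unfolding invertible_mat_def inverts_mat_def by (auto simp: block_diag_def)

lemma cmat_inv_block_diag:
  assumes "\<And>k. k < m \<Longrightarrow> F k \<in> carrier_mat T T" "\<And>k. k < m \<Longrightarrow> invertible_mat (F k)"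
  shows "cmat_inv (block_diag m T F) = block_diag m T (\<lambda>k. cmat_inv (F k))"
  by (rule cmat_inv_eqI) (simp_all add: block_diag_inverse assms)

lemma index_mat_block_sandwich:
  fixes A :: "'a :: conjugatable_field mat"
  assumes A: "A \<in> carrier_mat (m * T) (m * T)" and Q: "\<And>k. k < m \<Longrightarrow> Q k \<in> carrier_mat T T"
    and i: "i < m" and j: "j < m" and p: "p < T" and q: "q < T"
  shows "mat_block T (mat_adjoint A * block_diag m T Q * A) j i $$ (p, q)
    = (\<Sum>k<m. (mat_adjoint (mat_block T A k j) * Q k * mat_block T A k i) $$ (p, q))"
proof -
  have assoc: "mat_adjoint A * block_diag m T Q * A = mat_adjoint A * (block_diag m T Q * A)"
    by (rule assoc_mult_mat[OF _ block_diag_carrier A]) (use A in simp)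
  have "mat_block T (mat_adjoint A * block_diag m T Q * A) j i $$ (p, q)
      = (\<Sum>k<m. (mat_block T (mat_adjoint A) j k * mat_block T (block_diag m T Q * A) k i) $$ (p, q))"
    unfolding assoc using A
    by (intro index_mat_block_mult[OF _ mult_carrier_mat[OF block_diag_carrier A] j i p q]) simp
  also have "\<dots> = (\<Sum>k<m. (mat_adjoint (mat_block T A k j) * Q k * mat_block T A k i) $$ (p, q))"
  proof (intro sum.cong refl)
    fix k assume "k \<in> {..<m}"
    then have k: "k < m" by simp
    have "mat_block T (mat_adjoint A) j k * mat_block T (block_diag m T Q * A) k i
        = mat_adjoint (mat_block T A k j) * (Q k * mat_block T A k i)"
      by (simp add: mat_block_adjoint[OF A j k] mat_block_block_diag_mult[OF A Q k i])
    also have "\<dots> = mat_adjoint (mat_block T A k j) * Q k * mat_block T A k i"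
      using Q[OF k] by (simp add: assoc_mult_mat[of _ T T _ T _ T])
    finally show "(mat_block T (mat_adjoint A) j k * mat_block T (block_diag m T Q * A) k i) $$ (p, q)
        = (mat_adjoint (mat_block T A k j) * Q k * mat_block T A k i) $$ (p, q)" by (simp only:)
  qed
  finally show ?thesis .
qed

lemma psd_mat_block_sandwich_nonadjacent:
  fixes A :: "complex mat" and Q G :: "nat \<Rightarrow> complex mat" and c :: "nat \<Rightarrow> nat \<Rightarrow> real"
  assumes A: "A \<in> carrier_mat (m * T) (m * T)"
    and A_blocks: "\<And>k l. k < m \<Longrightarrow> l < m \<Longrightarrow> k \<noteq> l \<Longrightarrow>
      mat_block T A k l = complex_of_real (- c k l) \<cdot>\<^sub>m G k"
    and G: "\<And>k. k < m \<Longrightarrow> G k \<in> carrier_mat T T"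
    and c_nonneg: "\<And>k l. k < m \<Longrightarrow> l < m \<Longrightarrow> k \<noteq> l \<Longrightarrow> 0 \<le> c k l"
    and Q: "\<And>k. k < m \<Longrightarrow> Q k \<in> carrier_mat T T" "\<And>k. k < m \<Longrightarrow> psd_cmat (Q k)"
    and i: "i < m" and j: "j < m" and ij: "i \<noteq> j"
    and nonadjacent: "c i j = 0" "c j i = 0"
  shows "psd_cmat (mat_block T (mat_adjoint A * block_diag m T Q * A) j i)"
proof (rule psd_cmat_nonneg_combination[where K = "{..<m}"
      and M = "\<lambda>k. mat_adjoint (G k) * Q k * G k" and c = "\<lambda>k. c k j * c k i"])
  have summand: "mat_adjoint (mat_block T A k j) * Q k * mat_block T A k i
      = complex_of_real (c k j * c k i) \<cdot>\<^sub>m (mat_adjoint (G k) * Q k * G k)" if k: "k < m" for k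
  proof (cases "k = j \<or> k = i")
    case True
    \<comment> \<open>the term k = j vanishes since A_ji = 0, the term k = i since A_ij = 0\<close>
    then show ?thesis
      using A_blocks[OF j i] A_blocks[OF i j] ij nonadjacent G[OF k] Q(1)[OF k] by auto
  next
    case False
    then have "mat_block T A k j = complex_of_real (- c k j) \<cdot>\<^sub>m G k"
        "mat_block T A k i = complex_of_real (- c k i) \<cdot>\<^sub>m G k"
      using A_blocks k i j by auto
    then show ?thesis
      by (simp only: mat_adjoint_smult_mult_smult[OF G[OF k] Q(1)[OF k] G[OF k]]
          mult_minus_left mult_minus_right minus_minus)
  qed
  show "mat_block T (mat_adjoint A * block_diag m T Q * A) j i $$ (p, q)
      = (\<Sum>k\<in>{..<m}. complex_of_real (c k j * c k i) * (mat_adjoint (G k) * Q k * G k) $$ (p, q))"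
    if pq: "p < T" "q < T" for p q
  proof -
    have entry: "(mat_adjoint (mat_block T A k j) * Q k * mat_block T A k i) $$ (p, q)
        = complex_of_real (c k j * c k i) * (mat_adjoint (G k) * Q k * G k) $$ (p, q)" if "k < m" for k
      unfolding summand[OF that] using G[OF that] Q(1)[OF that] pq by simp
    have "mat_block T (mat_adjoint A * block_diag m T Q * A) j i $$ (p, q)
        = (\<Sum>k<m. (mat_adjoint (mat_block T A k j) * Q k * mat_block T A k i) $$ (p, q))"
      by (rule index_mat_block_sandwich[OF A Q(1) i j pq])
    also have "\<dots> = (\<Sum>k\<in>{..<m}.
        complex_of_real (c k j * c k i) * (mat_adjoint (G k) * Q k * G k) $$ (p, q))"
      by (intro sum.cong refl) (rule entry, simp)
    finally show ?thesis .
  qed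
  show "0 \<le> c k j * c k i" if "k \<in> {..<m}" for k
    using that c_nonneg[of k j] c_nonneg[of k i] i j nonadjacent by (cases "k = j \<or> k = i") auto
  show "psd_cmat (mat_adjoint (G k) * Q k * G k)" if "k \<in> {..<m}" for k
    using that psd_cmat_congruence[OF G Q(1) Q(2)] by blast
  show "mat_adjoint (G k) * Q k * G k \<in> carrier_mat T T" if "k \<in> {..<m}" for k
    using that G[of k] Q(1)[of k] by (intro mult_carrier_mat[of _ T T _ T]) auto
qed auto

section \<open>The lifted network\<close>

definition lift_fr_mat :: "(int \<Rightarrow> real) \<Rightarrow> nat \<Rightarrow> real \<Rightarrow> complex mat" where
  "lift_fr_mat f T \<omega> = mat T T (\<lambda>(p, t). lift_fr f T \<omega> p t)"

lemma one_minus_bigH_carrier: "1\<^sub>m (m * T) - bigH b g m T \<omega> \<in> carrier_mat (m * T) (m * T)"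
  by (rule minus_carrier_mat) (simp add: bigH_def)

lemma mat_block_one_minus_bigH:
  assumes "k < m" "l < m" "k \<noteq> l"
  shows "mat_block T (1\<^sub>m (m * T) - bigH b g m T \<omega>) k l
    = complex_of_real (- b k l) \<cdot>\<^sub>m lift_fr_mat (g k) T \<omega>"
  using assms block_index_less[OF assms(1)] block_index_less[OF assms(2)]
  by (intro eq_matI) (auto simp: bigH_def lift_fr_mat_def block_index_eq_iff)

lemma cmat_inv_PhiX:
  assumes PhiE: "\<And>k. k < m \<Longrightarrow> PhiE k \<omega> \<in> carrier_mat T T" "\<And>k. k < m \<Longrightarrow> pd_cmat (PhiE k \<omega>)"
    and invertible: "invertible_mat (1\<^sub>m (m * T) - bigH b g m T \<omega>)"
  shows "cmat_inv (PhiX b g PhiE m T \<omega>) = mat_adjoint (1\<^sub>m (m * T) - bigH b g m T \<omega>)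
    * block_diag m T (\<lambda>k. cmat_inv (PhiE k \<omega>)) * (1\<^sub>m (m * T) - bigH b g m T \<omega>)"
proof -
  define A where "A = 1\<^sub>m (m * T) - bigH b g m T \<omega>"
  have A: "A \<in> carrier_mat (m * T) (m * T)" unfolding A_def by (rule one_minus_bigH_carrier)
  have PhiE_invertible: "invertible_mat (PhiE k \<omega>)" if "k < m" for k
    by (rule pd_cmat_invertible[OF PhiE[OF that]])
  have "PhiX b g PhiE m T \<omega> = cmat_inv A * block_diag m T (\<lambda>k. PhiE k \<omega>) * mat_adjoint (cmat_inv A)"
    by (simp add: PhiX_def PhiE_blk_def block_diag_def A_def Let_def)
  also have "cmat_inv \<dots> = mat_adjoint A * cmat_inv (block_diag m T (\<lambda>k. PhiE k \<omega>)) * A"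
    by (rule cmat_inv_sandwich[OF A invertible[folded A_def] block_diag_carrier
          invertible_block_diag[OF PhiE(1) PhiE_invertible]])
  finally show ?thesis
    unfolding A_def[symmetric] by (simp only: cmat_inv_block_diag[OF PhiE(1) PhiE_invertible])
qed

theorem theorem3p1:
  fixes m T l :: nat and dt :: real
    and a :: "nat \<Rightarrow> nat \<Rightarrow> real" and b :: "nat \<Rightarrow> nat \<Rightarrow> real"
    and g :: "nat \<Rightarrow> int \<Rightarrow> real"
    and PhiE :: "nat \<Rightarrow> real \<Rightarrow> complex mat"
    and i j :: nat and \<omega> :: real
  assumes T_pos: "0 < T" and dt_pos: "0 < dt"
    and b_diag: "\<forall>k < m. b k k = 0"
    and b_nonneg: "\<forall>k < m. \<forall>k' < m. k \<noteq> k' \<longrightarrow> 0 \<le> b k k'"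
    and g_stable: "\<forall>k < m. (\<lambda>n. \<bar>g k n\<bar>) summable_on UNIV"
    and g_ztrans: "\<forall>k < m. \<forall>z. cmod z = 1 \<and> z \<noteq> -1 \<longrightarrow>
           Sden l a b m dt k z \<noteq> 0 \<and>
           ((\<lambda>n. of_real (g k n) * z powi (- n)) has_sum (1 / Sden l a b m dt k z)) UNIV"
    and PhiE_dim: "\<forall>k < m. \<forall>w. PhiE k w \<in> carrier_mat T T"
    and detectable: "\<forall>k < m. \<forall>w. pd_cmat (PhiE k w)"
    and well_posed: "AE w in lborel. invertible_mat (1\<^sub>m (m * T) - bigH b g m T w)"
    and ij: "i < m" "j < m" "i \<noteq> j"
    and two_hop: "i \<in> nbr2 b m j" "i \<notin> nbr b m j"
    and \<omega>_range: "\<omega> \<in> {0..<2 * pi}"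
    and defined: "invertible_mat (1\<^sub>m (m * T) - bigH b g m T \<omega>)"
  shows "psd_cmat (transpose_mat (Bsel m T j) * cmat_inv (PhiX b g PhiE m T \<omega>) * Bsel m T i)"
proof -
  define A where "A = 1\<^sub>m (m * T) - bigH b g m T \<omega>"
  define Q where "Q k = cmat_inv (PhiE k \<omega>)" for k
  have A: "A \<in> carrier_mat (m * T) (m * T)" unfolding A_def by (rule one_minus_bigH_carrier)
  have PhiE: "PhiE k \<omega> \<in> carrier_mat T T" "pd_cmat (PhiE k \<omega>)" if "k < m" for k
    using that PhiE_dim detectable by simp_all
  have Q: "Q k \<in> carrier_mat T T" "psd_cmat (Q k)" if "k < m" for k
    unfolding Q_def
    using cmat_inv_inverse(1)[OF PhiE(1)[OF that] pd_cmat_invertible[OF PhiE[OF that]]]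
      psd_cmat_inv[OF PhiE[OF that]] by simp_all
  have nonadjacent: "b i j = 0" "b j i = 0"
    using two_hop(2) ij by (simp_all add: nbr_def topo_edge_def)
  have "psd_cmat (mat_block T (mat_adjoint A * block_diag m T Q * A) j i)"
    using A Q ij b_nonneg nonadjacent
    by (intro psd_mat_block_sandwich_nonadjacent[where G = "\<lambda>k. lift_fr_mat (g k) T \<omega>" and c = b])
      (auto simp: A_def mat_block_one_minus_bigH lift_fr_mat_def)
  moreover have "mat_adjoint A * block_diag m T Q * A \<in> carrier_mat (m * T) (m * T)"
    using A by (intro mult_carrier_mat[of _ "m * T" "m * T" _ "m * T"]) auto
  ultimately show ?thesis
    using cmat_inv_PhiX[where PhiE = PhiE, OF PhiE defined] ij
    by (simp add: A_def[symmetric] Q_def[abs_def] transpose_Bsel_mult_Bsel)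
qed

end
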